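(* Every $W$-space is strongly $C$-selective.
   Context: All spaces are assumed $T_1$. For spaces $Y$ and $X$, a map $\varphi: Y\to\mathcal P(X)\setminus\{\emptyset\}$ is lower semicontinuous (l.s.c.) if for every open $U\subseteq X$ the set $\varphi^{-1}(U)=\{y\in Y:\varphi(y)\cap U\neq\emptyset\}$ is open in $Y$. A selection of $\varphi$ is a map $f:Y\to X$ with $f(y)\in\varphi(y)$ for all $y$. $X$ is strongly $Y$-selective if every l.s.c. map $Y\to\mathcal P(X)\setminus\{\emptyset\}$ has a continuous selection, and $X$ is strongly $C$-selective if it is strongly $Y$-selective for every countable regular space $Y$. For $x\in X$ consider the game in which, at stage $n$, player I chooses an open set $U_n\ni x$ and player II chooses a point $x_n\in U_n$; player I wins if the sequence $(x_n)$ converges to $x$. $X$ is a $W$-space if player I has a winning strategy in this game at every point $x\in X$. *)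

theory Defs
  imports "HOL-Analysis.Analysis"
begin

definition lsc_map :: "'b topology \<Rightarrow> 'a topology \<Rightarrow> ('b \<Rightarrow> 'a set) \<Rightarrow> bool" where
  "lsc_map Y X \<phi> \<longleftrightarrow>
     (\<forall>y\<in>topspace Y. \<phi> y \<noteq> {} \<and> \<phi> y \<subseteq> topspace X) \<and>
     (\<forall>U. openin X U \<longrightarrow> openin Y {y \<in> topspace Y. \<phi> y \<inter> U \<noteq> {}})"

definition strongly_selective :: "'a topology \<Rightarrow> 'b topology \<Rightarrow> bool" where
  "strongly_selective X Y \<longleftrightarrow>
     (\<forall>\<phi>. lsc_map Y X \<phi> \<longrightarrow>
        (\<exists>f. continuous_map Y X f \<and> (\<forall>y\<in>topspace Y. f y \<in> \<phi> y)))"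

text \<open>Player I strategy: maps the finite history of II's moves to an open nbhd of x;
  it is winning if every play consistent with it converges to x.\<close>
definition W_point :: "'a topology \<Rightarrow> 'a \<Rightarrow> bool" where
  "W_point X x \<longleftrightarrow>
     (\<exists>\<sigma> :: 'a list \<Rightarrow> 'a set.
        (\<forall>h. openin X (\<sigma> h) \<and> x \<in> \<sigma> h) \<and>
        (\<forall>s :: nat \<Rightarrow> 'a. (\<forall>n. s n \<in> \<sigma> (map s [0..<n])) \<longrightarrow> limitin X s x sequentially))"

definition W_space :: "'a topology \<Rightarrow> bool" where
  "W_space X \<longleftrightarrow> (\<forall>x\<in>topspace X. W_point X x)"

end

theory Submission
  imports Defs
begin

(* Countable regular spaces are zero-dimensional. Fix a winning strategy sigma_p of player I at
   every point p of X and enumerate all pairs (y, w) of a point y of Y and a finite list w of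
   points of Y. Stage by stage, the l.s.c. map phi is shrunk on clopen sets, which keeps it
   l.s.c., while the values of a selection get fixed at finitely many points: at the stage of
   (y, w), the values on a clopen neighbourhood D of y avoiding the other fixed points are shrunk
   into sigma_(f y) (f w). The limit selection f is continuous at y: otherwise player II could
   answer every history f w by a value f z with z in the corresponding D, outside a fixed
   neighbourhood of f y, and win against sigma_(f y). *)

lemma countable_completely_regular_imp_dimension_le_0:
  assumes creg: "completely_regular_space Y" and ctbl: "countable (topspace Y)"
  shows "Y dim_le 0"
proof -
  have "\<exists>D. (closedin Y D \<and> openin Y D) \<and> y \<in> D \<and> D \<subseteq> G" if G: "openin Y G" "y \<in> G" for G y
  proof -
    obtain g where g: "continuous_map Y euclideanreal g" "g y = 0" "g ` (topspace Y - G) \<subseteq> {1}"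
      using creg G unfolding completely_regular_space_alt' by blast
    \<comment> \<open>The countable image of \<open>g\<close> misses a level \<open>r\<close>, so \<open>{g < r} = {g \<le> r}\<close> is clopen.\<close>
    have "countable (g ` topspace Y)" using ctbl by blast
    moreover have "uncountable {0::real<..<1}" by (simp add: uncountable_open_interval)
    ultimately obtain r where r: "r \<in> {0<..<1}" "r \<notin> g ` topspace Y"
      by (metis countable_subset subsetI)
    define D where "D = {z \<in> topspace Y. g z < r}"
    have "D = {z \<in> topspace Y. g z \<in> {..r}}"
      using r(2) by (force simp: D_def)
    then have "closedin Y D"
      using closedin_continuous_map_preimage[OF g(1), of "{..r}"] by simp
    moreover have "openin Y D"
      unfolding D_def using openin_continuous_map_preimage[OF g(1), of "{..<r}"] by simp
    moreover have "y \<in> D"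
      using g(2) r(1) G openin_subset by (auto simp: D_def)
    moreover have "D \<subseteq> G"
      using g(3) r(1) by (force simp: D_def)
    ultimately show ?thesis by blast
  qed
  then show ?thesis
    by (subst dimension_le_0_neighbourhood_base_of_clopen, subst open_neighbourhood_base_of) auto
qed

lemma countable_regular_imp_dimension_le_0:
  assumes "regular_space Y" and "countable (topspace Y)"
  shows "Y dim_le 0"
proof -
  have "normal_space Y"
    using regular_Lindelof_imp_normal_space[OF assms(1) countable_imp_Lindelof_space[OF assms(2)]] .
  then have "completely_regular_space Y"
    using assms(1) by (simp add: normal_imp_completely_regular_space)
  then show ?thesis
    using assms(2) by (rule countable_completely_regular_imp_dimension_le_0)
qed

definition winning_strategy :: "'a topology \<Rightarrow> 'a \<Rightarrow> ('a list \<Rightarrow> 'a set) \<Rightarrow> bool" where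
  "winning_strategy X x \<sigma> \<longleftrightarrow>
     (\<forall>h. openin X (\<sigma> h) \<and> x \<in> \<sigma> h) \<and>
     (\<forall>s. (\<forall>n. s n \<in> \<sigma> (map s [0..<n])) \<longrightarrow> limitin X s x sequentially)"

lemma W_point_iff_winning_strategy: "W_point X x \<longleftrightarrow> (\<exists>\<sigma>. winning_strategy X x \<sigma>)"
  by (simp add: W_point_def winning_strategy_def)

lemma W_space_winning_strategies:
  assumes "W_space X"
  obtains \<sigma> where "\<And>p. p \<in> topspace X \<Longrightarrow> winning_strategy X p (\<sigma> p)"
proof -
  have "\<forall>p\<in>topspace X. \<exists>\<sigma>. winning_strategy X p \<sigma>"
    using assms unfolding W_space_def W_point_iff_winning_strategy .
  then show thesis
    using that by metis
qed

lemma history_recursion: "\<exists>s. \<forall>n. s n = c (map s [0..<n])"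
proof -
  define L where "L = rec_nat [] (\<lambda>_ l. l @ [c l])"
  define s where "s n = c (L n)" for n
  have L: "L n = map s [0..<n]" for n
    by (induction n) (simp_all add: L_def s_def)
  have "s n = c (map s [0..<n])" for n
    using L[of n] by (simp only: s_def[of n])
  then show ?thesis by blast
qed

lemma winning_strategy_forces_nbhd:
  assumes win: "winning_strategy X x \<sigma>" and U: "openin X U" "x \<in> U"
  shows "\<exists>h\<in>lists A. A \<inter> \<sigma> h \<subseteq> U"
proof (rule ccontr)
  assume none: "\<not> ?thesis"
  have "\<exists>a. a \<in> A \<and> a \<in> \<sigma> h \<and> a \<notin> U" if "h \<in> lists A" for h
    using none that by blast
  then obtain c where c: "\<And>h. h \<in> lists A \<Longrightarrow> c h \<in> A \<and> c h \<in> \<sigma> h \<and> c h \<notin> U"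
    by metis
  \<comment> \<open>Player II answers every history by such a point; this play does not converge to \<open>x\<close>.\<close>
  obtain p where p: "\<And>n. p n = c (map p [0..<n])"
    using history_recursion by blast
  have play: "p n \<in> A \<and> p n \<in> \<sigma> (map p [0..<n]) \<and> p n \<notin> U" for n
  proof (induction n rule: less_induct)
    case (less n)
    then have "map p [0..<n] \<in> lists A" by auto
    from c[OF this] show ?case
      using p[of n] by simp
  qed
  then have "limitin X p x sequentially"
    using win unfolding winning_strategy_def by blast
  then obtain N where "\<forall>n\<ge>N. p n \<in> U"
    using U unfolding limitin_sequentially by auto
  then show False
    using play by blast
qed

lemma continuous_map_by_winning_strategies:
  assumes f: "f ` topspace Y \<subseteq> topspace X"
    and win: "\<And>y. y \<in> topspace Y \<Longrightarrow> winning_strategy X (f y) (\<sigma> y)"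
    and nbhd: "\<And>y ws. \<lbrakk>y \<in> topspace Y; set ws \<subseteq> topspace Y\<rbrakk>
                 \<Longrightarrow> \<exists>D. openin Y D \<and> y \<in> D \<and> f ` D \<subseteq> \<sigma> y (map f ws)"
  shows "continuous_map Y X f"
  unfolding continuous_map_eq_topcontinuous_at topcontinuous_at_def
proof (intro ballI conjI allI impI)
  fix y assume y: "y \<in> topspace Y"
  then show "y \<in> topspace Y" .
  show "f \<in> topspace Y \<rightarrow> topspace X"
    using f by blast
  fix U assume "openin X U \<and> f y \<in> U"
  then obtain h where "h \<in> lists (f ` topspace Y)" and h: "f ` topspace Y \<inter> \<sigma> y h \<subseteq> U"
    using winning_strategy_forces_nbhd[OF win[OF y]] by blast
  then have "h \<in> map f ` lists (topspace Y)"
    by (simp add: lists_image)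
  then obtain ws where ws: "set ws \<subseteq> topspace Y" and "h = map f ws"
    by (auto simp: lists_eq_set)
  then obtain D where D: "openin Y D" "y \<in> D" "f ` D \<subseteq> \<sigma> y h"
    using nbhd[OF y ws] by blast
  then show "\<exists>T. openin Y T \<and> y \<in> T \<and> (\<forall>z\<in>T. f z \<in> U)"
    using h openin_subset[OF D(1)] by blast
qed

lemma lsc_map_shrink_on_clopen:
  assumes lsc: "lsc_map Y X \<psi>" and D: "closedin Y D" "openin Y D" and V: "openin X V"
    and meets: "\<And>z. z \<in> D \<Longrightarrow> \<psi> z \<inter> V \<noteq> {}"
  shows "lsc_map Y X (\<lambda>z. if z \<in> D then \<psi> z \<inter> V else \<psi> z)"
  unfolding lsc_map_def
proof (intro conjI ballI allI impI)
  fix z assume "z \<in> topspace Y"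
  then show "(if z \<in> D then \<psi> z \<inter> V else \<psi> z) \<noteq> {}"
    and "(if z \<in> D then \<psi> z \<inter> V else \<psi> z) \<subseteq> topspace X"
    using lsc meets unfolding lsc_map_def by auto
next
  fix U assume U: "openin X U"
  have "{z \<in> topspace Y. (if z \<in> D then \<psi> z \<inter> V else \<psi> z) \<inter> U \<noteq> {}}
      = (D \<inter> {z \<in> topspace Y. \<psi> z \<inter> (V \<inter> U) \<noteq> {}}) \<union>
        ((topspace Y - D) \<inter> {z \<in> topspace Y. \<psi> z \<inter> U \<noteq> {}})"
    using openin_subset[OF D(2)] by auto
  moreover have "openin Y {z \<in> topspace Y. \<psi> z \<inter> (V \<inter> U) \<noteq> {}}"
    and "openin Y {z \<in> topspace Y. \<psi> z \<inter> U \<noteq> {}}"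
    using lsc V U unfolding lsc_map_def by auto
  ultimately show "openin Y {z \<in> topspace Y. (if z \<in> D then \<psi> z \<inter> V else \<psi> z) \<inter> U \<noteq> {}}"
    using D by (auto intro!: openin_Un openin_Int openin_diff)
qed

lemma lsc_selection_refinement:
  assumes zd: "Y dim_le 0" and T1: "t1_space Y" and lsc: "lsc_map Y X \<psi>"
    and g: "\<And>z. z \<in> topspace Y \<Longrightarrow> g z \<in> \<psi> z"
    and A: "finite A" "A \<subseteq> topspace Y" "y \<in> A" and V: "openin X V" "g y \<in> V"
  obtains \<psi>' g' D where "lsc_map Y X \<psi>'" "\<And>z. z \<in> topspace Y \<Longrightarrow> g' z \<in> \<psi>' z"
    "\<And>z. \<psi>' z \<subseteq> \<psi> z" "\<And>z. z \<in> A \<Longrightarrow> g' z = g z"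
    "openin Y D" "y \<in> D" "\<And>z. z \<in> D \<Longrightarrow> \<psi>' z \<subseteq> V"
proof -
  define H where "H = {z \<in> topspace Y. \<psi> z \<inter> V \<noteq> {}} - (A - {y})"
  have "closedin Y (A - {y})"
    using T1 A unfolding t1_space_closedin_finite by blast
  moreover have "openin Y {z \<in> topspace Y. \<psi> z \<inter> V \<noteq> {}}"
    using lsc V unfolding lsc_map_def by blast
  ultimately have "openin Y H"
    unfolding H_def by (rule openin_diff[rotated])
  moreover have "y \<in> H"
    using g V A by (auto simp: H_def)
  moreover have "\<forall>W x. openin Y W \<and> x \<in> W \<longrightarrow> (\<exists>D. (closedin Y D \<and> openin Y D) \<and> x \<in> D \<and> D \<subseteq> W)"
    using zd by (simp add: dimension_le_0_neighbourhood_base_of_clopen open_neighbourhood_base_of)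
  ultimately obtain D where D: "closedin Y D" "openin Y D" "y \<in> D" and D_sub: "D \<subseteq> H"
    by blast
  define \<psi>' where "\<psi>' z = (if z \<in> D then \<psi> z \<inter> V else \<psi> z)" for z
  have lsc': "lsc_map Y X \<psi>'"
    unfolding \<psi>'_def using lsc_map_shrink_on_clopen[OF lsc D(1,2) V(1)] D_sub H_def by blast
  define g' where "g' z = (if g z \<in> \<psi>' z then g z else (SOME x. x \<in> \<psi>' z))" for z
  show thesis
  proof (rule that[OF lsc' _ _ _ D(2,3)])
    show "g' z \<in> \<psi>' z" if "z \<in> topspace Y" for z
      using lsc' that unfolding g'_def lsc_map_def by (auto simp: some_in_eq)
    show "\<psi>' z \<subseteq> \<psi> z" for z
      by (simp add: \<psi>'_def)
    show "g' z = g z" if "z \<in> A" for z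
      using that A g V D_sub unfolding g'_def \<psi>'_def H_def by auto
    show "\<psi>' z \<subseteq> V" if "z \<in> D" for z
      using that by (simp add: \<psi>'_def)
  qed
qed

definition settled_points :: "(nat \<Rightarrow> 'b \<times> 'b list) \<Rightarrow> nat \<Rightarrow> 'b set" where
  "settled_points task n = (\<Union>m<n. insert (fst (task m)) (set (snd (task m))))"

lemma settled_points_mono: "m \<le> n \<Longrightarrow> settled_points task m \<subseteq> settled_points task n"
  unfolding settled_points_def by (intro UN_mono) auto

lemma settled_points_subset:
  assumes "range task \<subseteq> T \<times> lists T"
  shows "settled_points task n \<subseteq> T"
proof -
  have "task m \<in> T \<times> lists T" for m
    using assms by blast
  then have "fst (task m) \<in> T \<and> set (snd (task m)) \<subseteq> T" for m
    by (auto simp: mem_Times_iff lists_eq_set)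
  then show ?thesis
    unfolding settled_points_def by blast
qed

lemma staged_refinement:
  fixes Y :: "'b topology" and X :: "'a topology"
  assumes zd: "Y dim_le 0" and T1: "t1_space Y" and lsc: "lsc_map Y X \<phi>"
    and \<sigma>: "\<And>p h. p \<in> topspace X \<Longrightarrow> openin X (\<sigma> p h) \<and> p \<in> \<sigma> p h"
    and task: "range task \<subseteq> topspace Y \<times> lists (topspace Y)"
  obtains \<psi> g where "\<And>n z. \<psi> n z \<subseteq> \<phi> z" "\<And>n z. \<psi> (Suc n) z \<subseteq> \<psi> n z"
    "\<And>n z. z \<in> topspace Y \<Longrightarrow> g n z \<in> \<psi> n z"
    "\<And>n z. z \<in> settled_points task (Suc n) \<Longrightarrow> g (Suc n) z = g n z"
    "\<And>n. \<exists>D. openin Y D \<and> fst (task n) \<in> D \<and>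
       (\<forall>z\<in>D. \<psi> (Suc n) z \<subseteq> \<sigma> (g n (fst (task n))) (map (g n) (snd (task n))))"
proof -
  define P where "P n s \<longleftrightarrow> lsc_map Y X (fst s) \<and> (\<forall>z. fst s z \<subseteq> \<phi> z) \<and>
      (\<forall>z\<in>topspace Y. snd s z \<in> fst s z)"
    for n :: nat and s :: "('b \<Rightarrow> 'a set) \<times> ('b \<Rightarrow> 'a)"
  define Q where "Q n s s' \<longleftrightarrow> (\<forall>z. fst s' z \<subseteq> fst s z) \<and>
      (\<forall>z\<in>settled_points task (Suc n). snd s' z = snd s z) \<and>
      (\<exists>D. openin Y D \<and> fst (task n) \<in> D \<and>
         (\<forall>z\<in>D. fst s' z \<subseteq> \<sigma> (snd s (fst (task n))) (map (snd s) (snd (task n)))))"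
    for n :: nat and s s' :: "('b \<Rightarrow> 'a set) \<times> ('b \<Rightarrow> 'a)"
  have "P 0 (\<phi>, \<lambda>z. SOME x. x \<in> \<phi> z)"
    using lsc unfolding P_def lsc_map_def by (auto simp: some_in_eq)
  moreover have "\<exists>s'. P (Suc n) s' \<and> Q n (\<psi>, g) s'" if "P n (\<psi>, g)" for n \<psi> g
  proof -
    have \<psi>: "lsc_map Y X \<psi>" "\<And>z. \<psi> z \<subseteq> \<phi> z" and g: "\<And>z. z \<in> topspace Y \<Longrightarrow> g z \<in> \<psi> z"
      using that unfolding P_def by auto
    obtain y ws where yws: "task n = (y, ws)"
      by fastforce
    have A: "finite (settled_points task (Suc n))" "settled_points task (Suc n) \<subseteq> topspace Y"
      using settled_points_subset[OF task] by (auto simp: settled_points_def)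
    have y: "y \<in> settled_points task (Suc n)"
      using yws by (auto simp: settled_points_def intro!: bexI[of _ n])
    then have "g y \<in> topspace X"
      using A(2) g \<psi>(1) unfolding lsc_map_def by blast
    then obtain \<psi>' g' D
      where \<psi>': "lsc_map Y X \<psi>'" "\<And>z. \<psi>' z \<subseteq> \<psi> z"
        and g': "\<And>z. z \<in> topspace Y \<Longrightarrow> g' z \<in> \<psi>' z"
          "\<And>z. z \<in> settled_points task (Suc n) \<Longrightarrow> g' z = g z"
        and D: "openin Y D" "y \<in> D" "\<And>z. z \<in> D \<Longrightarrow> \<psi>' z \<subseteq> \<sigma> (g y) (map g ws)"
      using lsc_selection_refinement[OF zd T1 \<psi>(1) g A y, of "\<sigma> (g y) (map g ws)"] \<sigma> by metis
    have "P (Suc n) (\<psi>', g')"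
      unfolding P_def using \<psi>' g' \<psi>(2) by simp (meson subset_trans)
    moreover have "Q n (\<psi>, g) (\<psi>', g')"
      unfolding Q_def yws using \<psi>'(2) g'(2) D by fastforce
    ultimately show ?thesis by blast
  qed
  ultimately obtain s where s: "\<And>n. P n (s n) \<and> Q n (s n) (s (Suc n))"
    using dependent_nat_choice[of P Q] by (metis prod.collapse)
  show thesis
    by (rule that[of "fst \<circ> s" "snd \<circ> s"]) (use s in \<open>simp_all add: P_def Q_def\<close>)
qed

lemma stable_limit_exists:
  assumes "mono S" and stable: "\<And>n z. z \<in> S (Suc n) \<Longrightarrow> g (Suc n) z = g n z"
  obtains f where "\<And>n z. z \<in> S n \<Longrightarrow> f z = g n z"
proof -
  have g_stable: "g n z = g m z" if "z \<in> S m" "m \<le> n" for m n z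
    using that(2)
  proof (induction n rule: dec_induct)
    case (step n)
    have "z \<in> S (Suc n)"
      using monoD[OF \<open>mono S\<close>, of m "Suc n"] step(1) that(1) by auto
    then show ?case
      using stable step.IH by simp
  qed simp
  define f where "f z = g (SOME n. z \<in> S n) z" for z
  have "f z = g n z" if "z \<in> S n" for n z
  proof -
    define k where "k = (SOME n. z \<in> S n)"
    have "z \<in> S k"
      unfolding k_def using that by (rule someI)
    then have "g k z = g (max k n) z" and "g n z = g (max k n) z"
      using g_stable[of z k "max k n"] g_stable[OF that, of "max k n"] by simp_all
    then show ?thesis by (simp add: f_def k_def)
  qed
  then show thesis by (rule that)
qed

lemma selection_following_strategies:
  fixes Y :: "'b topology" and X :: "'a topology"
  assumes zd: "Y dim_le 0" and T1: "t1_space Y" and ctbl: "countable (topspace Y)"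
    and lsc: "lsc_map Y X \<phi>"
    and \<sigma>: "\<And>p h. p \<in> topspace X \<Longrightarrow> openin X (\<sigma> p h) \<and> p \<in> \<sigma> p h"
  obtains f where "\<And>y. y \<in> topspace Y \<Longrightarrow> f y \<in> \<phi> y"
    "\<And>y ws. \<lbrakk>y \<in> topspace Y; set ws \<subseteq> topspace Y\<rbrakk>
       \<Longrightarrow> \<exists>D. openin Y D \<and> y \<in> D \<and> f ` D \<subseteq> \<sigma> (f y) (map f ws)"
proof (cases "topspace Y = {}")
  case True
  show thesis
    by (rule that) (use True in auto)
next
  case False
  define task where "task = from_nat_into (topspace Y \<times> lists (topspace Y))"
  have "topspace Y \<times> lists (topspace Y) \<noteq> {}" "countable (topspace Y \<times> lists (topspace Y))"
    using False ctbl by auto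
  then have task: "range task = topspace Y \<times> lists (topspace Y)"
    by (simp add: task_def)
  then have task_sub: "range task \<subseteq> topspace Y \<times> lists (topspace Y)"
    by simp
  obtain \<psi> g where \<psi>: "\<And>n z. \<psi> n z \<subseteq> \<phi> z" "\<And>n z. \<psi> (Suc n) z \<subseteq> \<psi> n z"
      and g: "\<And>n z. z \<in> topspace Y \<Longrightarrow> g n z \<in> \<psi> n z"
      and settled: "\<And>n z. z \<in> settled_points task (Suc n) \<Longrightarrow> g (Suc n) z = g n z"
      and nbhd: "\<And>n. \<exists>D. openin Y D \<and> fst (task n) \<in> D \<and>
         (\<forall>z\<in>D. \<psi> (Suc n) z \<subseteq> \<sigma> (g n (fst (task n))) (map (g n) (snd (task n))))"
    using staged_refinement[where \<sigma> = \<sigma>, OF zd T1 lsc \<sigma> task_sub] by blast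
  have mono_settled: "mono (settled_points task)"
    by (rule monoI) (rule settled_points_mono)
  obtain f where f_eq: "\<And>n z. z \<in> settled_points task n \<Longrightarrow> f z = g n z"
    using stable_limit_exists[where g = g, OF mono_settled settled] by blast
  have settled_task: "insert y (set ws) \<subseteq> settled_points task (Suc n)"
    if "task n = (y, ws)" for n y ws
    using that by (auto simp: settled_points_def intro!: bexI[of _ n])
  have f_in: "f z \<in> \<psi> n z" if "z \<in> topspace Y" for z n
  proof -
    have "(z, []) \<in> range task"
      using task that by simp
    then obtain k where "task k = (z, [])"
      by (metis rangeE)
    then have "z \<in> settled_points task (max n (Suc k))"
      using settled_task settled_points_mono[of "Suc k" "max n (Suc k)" task] by auto
    then have "f z = g (max n (Suc k)) z"
      by (rule f_eq)
    also have "\<dots> \<in> \<psi> (max n (Suc k)) z"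
      using g that by blast
    also have "\<dots> \<subseteq> \<psi> n z"
      by (rule lift_Suc_antimono_le[of "\<lambda>n. \<psi> n z"]) (use \<psi>(2) in auto)
    finally show ?thesis .
  qed
  show thesis
  proof (rule that)
    show "f y \<in> \<phi> y" if "y \<in> topspace Y" for y
      using f_in[OF that, of 0] \<psi>(1) by blast
    fix y ws assume "y \<in> topspace Y" "set ws \<subseteq> topspace Y"
    then have "(y, ws) \<in> range task"
      using task by (simp add: lists_eq_set)
    then obtain n where n: "task n = (y, ws)"
      by (metis rangeE)
    have "f z = g n z" if "z \<in> insert y (set ws)" for z
    proof -
      have z: "z \<in> settled_points task (Suc n)"
        using settled_task[OF n] that by blast
      show ?thesis
        using f_eq[OF z] settled[OF z] by simp
    qed
    then have f_hist: "\<sigma> (f y) (map f ws) = \<sigma> (g n y) (map (g n) ws)"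
      by (simp cong: map_cong)
    obtain D where D: "openin Y D" "y \<in> D"
        and D_sub: "\<forall>z\<in>D. \<psi> (Suc n) z \<subseteq> \<sigma> (g n y) (map (g n) ws)"
      using nbhd[of n] n by auto
    have "f z \<in> \<sigma> (f y) (map f ws)" if "z \<in> D" for z
      using f_in[of z "Suc n"] D_sub that openin_subset[OF D(1)] f_hist by blast
    then show "\<exists>D. openin Y D \<and> y \<in> D \<and> f ` D \<subseteq> \<sigma> (f y) (map f ws)"
      using D by blast
  qed
qed

theorem mainTheorem1:
  fixes X :: "'a topology" and Y :: "'b topology"
  assumes "t1_space X" and "W_space X"
    and "t1_space Y" and "regular_space Y" and "countable (topspace Y)"
  shows "strongly_selective X Y"
  unfolding strongly_selective_def
proof (intro allI impI)
  fix \<phi> assume lsc: "lsc_map Y X \<phi>"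
  obtain \<sigma> where win: "\<And>p. p \<in> topspace X \<Longrightarrow> winning_strategy X p (\<sigma> p)"
    using W_space_winning_strategies[OF assms(2)] by blast
  then have \<sigma>_nbhd: "openin X (\<sigma> p h) \<and> p \<in> \<sigma> p h" if "p \<in> topspace X" for p h
    using that unfolding winning_strategy_def by blast
  obtain f where sel: "\<And>y. y \<in> topspace Y \<Longrightarrow> f y \<in> \<phi> y"
    and nbhd: "\<And>y ws. \<lbrakk>y \<in> topspace Y; set ws \<subseteq> topspace Y\<rbrakk>
       \<Longrightarrow> \<exists>D. openin Y D \<and> y \<in> D \<and> f ` D \<subseteq> \<sigma> (f y) (map f ws)"
    using selection_following_strategies[where \<sigma> = \<sigma>,
        OF countable_regular_imp_dimension_le_0[OF assms(4,5)] assms(3,5) lsc \<sigma>_nbhd]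
    by blast
  have fX: "f ` topspace Y \<subseteq> topspace X"
    using sel lsc unfolding lsc_map_def by blast
  then have "continuous_map Y X f"
    by (rule continuous_map_by_winning_strategies) (use win fX nbhd in auto)
  then show "\<exists>f. continuous_map Y X f \<and> (\<forall>y\<in>topspace Y. f y \<in> \<phi> y)"
    using sel by blast
qed

end
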